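(* Let $\delta\in(0,1)$, $k\ge1$, and let $G=S_k$ be the star with one hub and $k$ leaves, with vertex set $V$ and $\mathcal H=\{\{i,j\}:\{i,j\}\in E(S_k)\}$. Then $$\mu_{\mathrm{leaf}}(V;r^{v^G}_{\mathcal H})=\delta+\frac{2(k-1)}{3}\delta^2\quad\text{for every leaf},\qquad \mu_{\mathrm{hub}}(V;r^{v^G}_{\mathcal H})=k\delta+\frac{k(k-1)}{3}\delta^2.$$
   Context: For a finite simple undirected graph $G=(V,E)$ and $\delta\in(0,1)$: for $S\subseteq V$, $G[S]$ is the induced subgraph and $t_{ij}(G[S])$ the shortest-path distance in $G[S]$ ($=\infty$ if disconnected), with $\delta^\infty:=0$. The distance-polynomial worth is $v^G(S):=\sum_{i\in S}\sum_{j\in S,\,j\neq i}\delta^{t_{ij}(G[S])}$. For a conference structure $\mathcal H$ (family of subsets of $V$ of size $\ge2$) and $C\subseteq V$, $C/\mathcal H$ is the partition of $C$ into classes connected via chains of pairwise-intersecting members of $\mathcal H$ contained in $C$, and $r^{v^G}_{\mathcal H}(C):=\sum_{B\in C/\mathcal H}v^G(B)$. For a TU game $u$ on finite player set $N$, $\mu_i(N;u):=\sum_{S\subseteq N\setminus\{i\}}\frac{|S|!(|N|-|S|-1)!}{|N|!}(u(S\cup\{i\})-u(S))$. *)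

theory Defs
  imports Complex_Main "HOL-Library.Extended_Nat"
begin

text \<open>Simple graphs given by an edge relation E (symmetric, irreflexive) on vertex type 'a.\<close>

definition walk_in :: "('a \<Rightarrow> 'a \<Rightarrow> bool) \<Rightarrow> 'a set \<Rightarrow> 'a \<Rightarrow> 'a \<Rightarrow> nat \<Rightarrow> bool" where
  "walk_in E S i j n \<longleftrightarrow> (\<exists>xs. length xs = Suc n \<and> hd xs = i \<and> last xs = j \<and> set xs \<subseteq> S
      \<and> (\<forall>m<n. E (xs ! m) (xs ! Suc m)))"

definition sp_dist :: "('a \<Rightarrow> 'a \<Rightarrow> bool) \<Rightarrow> 'a set \<Rightarrow> 'a \<Rightarrow> 'a \<Rightarrow> enat" where
  "sp_dist E S i j = (if \<exists>n. walk_in E S i j n then enat (LEAST n. walk_in E S i j n) else \<infinity>)"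

definition dpow :: "real \<Rightarrow> enat \<Rightarrow> real" where
  "dpow d t = (case t of enat n \<Rightarrow> d ^ n | \<infinity> \<Rightarrow> 0)"

definition worth :: "real \<Rightarrow> ('a \<Rightarrow> 'a \<Rightarrow> bool) \<Rightarrow> 'a set \<Rightarrow> real" where
  "worth d E S = (\<Sum>i\<in>S. \<Sum>j\<in>S - {i}. dpow d (sp_dist E S i j))"

definition conf_conn :: "'a set set \<Rightarrow> 'a set \<Rightarrow> 'a \<Rightarrow> 'a \<Rightarrow> bool" where
  "conf_conn H C x y \<longleftrightarrow> (x = y \<and> x \<in> C) \<or>
     (\<exists>hs. hs \<noteq> [] \<and> set hs \<subseteq> {h \<in> H. h \<subseteq> C} \<and> x \<in> hd hs \<and> y \<in> last hs
        \<and> (\<forall>m. Suc m < length hs \<longrightarrow> hs ! m \<inter> hs ! Suc m \<noteq> {}))"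

definition conf_partition :: "'a set set \<Rightarrow> 'a set \<Rightarrow> 'a set set" where
  "conf_partition H C = C // {(x, y). conf_conn H C x y}"

definition conf_restr :: "('a set \<Rightarrow> real) \<Rightarrow> 'a set set \<Rightarrow> 'a set \<Rightarrow> real" where
  "conf_restr u H C = (\<Sum>B\<in>conf_partition H C. u B)"

definition shapley :: "'a \<Rightarrow> 'a set \<Rightarrow> ('a set \<Rightarrow> real) \<Rightarrow> real" where
  "shapley i N u = (\<Sum>S\<in>Pow (N - {i}).
      (fact (card S) * fact (card N - card S - 1) / fact (card N)) * (u (insert i S) - u S))"

text \<open>Star S_k: hub 0, leaves 1..k.\<close>
definition star_edge :: "nat \<Rightarrow> nat \<Rightarrow> nat \<Rightarrow> bool" where
  "star_edge k x y \<longleftrightarrow> (x = 0 \<and> y \<in> {1..k}) \<or> (y = 0 \<and> x \<in> {1..k})"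

end

(*
  In the star, every member of H contains the hub. A coalition without the hub is therefore
  split into singletons and is worth 0, while a coalition consisting of the hub and m leaves
  is a single class in which hub-leaf pairs are at distance 1 and leaf-leaf pairs at
  distance 2, so it is worth f(m) = 2 m d + m (m - 1) d^2. The hub's marginal contribution
  to a coalition of s leaves is thus f(s); a leaf's marginal contribution vanishes unless
  the hub is present, and is f(t + 1) - f(t) when t other leaves are present. Grouping
  coalitions by size, the Shapley weights collapse to 1/(k + 1) for the hub and to
  (t + 1)/(k (k + 1)) for a leaf, and the resulting sums of polynomials in s and t give the
  two closed forms. The identities are polynomial in d.
*)

theory Submission
  imports Defs
begin

lemma walk_in_0_iff: "walk_in E S i j 0 \<longleftrightarrow> i = j \<and> i \<in> S"
proof
  assume "walk_in E S i j 0"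
  then obtain xs where "length xs = 1" "hd xs = i" "last xs = j" "set xs \<subseteq> S"
    unfolding walk_in_def by auto
  then show "i = j \<and> i \<in> S" by (cases xs) auto
qed (auto simp: walk_in_def intro!: exI[of _ "[i]"])

lemma walk_in_1_iff: "walk_in E S i j (Suc 0) \<longleftrightarrow> i \<in> S \<and> j \<in> S \<and> E i j"
proof
  assume "walk_in E S i j (Suc 0)"
  then obtain xs where "length xs = Suc (Suc 0)" "hd xs = i" "last xs = j" "set xs \<subseteq> S"
    "E (xs ! 0) (xs ! Suc 0)"
    unfolding walk_in_def by auto
  then show "i \<in> S \<and> j \<in> S \<and> E i j" by (cases xs; cases "tl xs") auto
qed (auto simp: walk_in_def intro!: exI[of _ "[i, j]"])

lemma walk_in_2I:
  assumes "i \<in> S" "x \<in> S" "j \<in> S" "E i x" "E x j"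
  shows "walk_in E S i j 2"
  unfolding walk_in_def using assms
  by (intro exI[of _ "[i, x, j]"]) (auto simp: less_Suc_eq numeral_2_eq_2)

lemma sp_dist_eqI:
  assumes "walk_in E S i j n" "\<And>m. m < n \<Longrightarrow> \<not> walk_in E S i j m"
  shows "sp_dist E S i j = enat n"
  unfolding sp_dist_def using assms by (auto intro!: Least_equality) (meson not_le)

lemma sp_dist_eq_1:
  assumes "i \<in> S" "j \<in> S" "E i j" "i \<noteq> j"
  shows "sp_dist E S i j = enat 1"
  using assms by (intro sp_dist_eqI) (auto simp: walk_in_0_iff walk_in_1_iff)

lemma sp_dist_eq_2:
  assumes "i \<in> S" "x \<in> S" "j \<in> S" "E i x" "E x j" "\<not> E i j" "i \<noteq> j"
  shows "sp_dist E S i j = enat 2"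
proof (rule sp_dist_eqI)
  show "walk_in E S i j 2" using assms(1-5) by (rule walk_in_2I)
  show "\<not> walk_in E S i j m" if "m < 2" for m
    using that assms by (auto simp: less_2_cases_iff walk_in_0_iff walk_in_1_iff)
qed

lemma dpow_enat [simp]: "dpow d (enat n) = d ^ n"
  by (simp add: dpow_def)

lemma worth_singleton [simp]: "worth d E {x} = 0"
  by (simp add: worth_def)

lemma conf_conn_in: "conf_conn H C x y \<Longrightarrow> x \<in> C \<and> y \<in> C"
  unfolding conf_conn_def by (blast dest: hd_in_set last_in_set)

lemma conf_conn_chain2I:
  assumes "h1 \<in> H" "h2 \<in> H" "h1 \<subseteq> C" "h2 \<subseteq> C" "x \<in> h1" "y \<in> h2" "h1 \<inter> h2 \<noteq> {}"
  shows "conf_conn H C x y"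
  unfolding conf_conn_def using assms
  by (intro disjI2 exI[of _ "[h1, h2]"]) (auto simp: less_Suc_eq)

lemma conf_conn_no_member_iff:
  assumes "\<forall>h\<in>H. \<not> h \<subseteq> C"
  shows "conf_conn H C x y \<longleftrightarrow> x = y \<and> x \<in> C"
  unfolding conf_conn_def using assms by (auto dest!: hd_in_set)

lemma conf_partition_no_member:
  assumes "\<forall>h\<in>H. \<not> h \<subseteq> C"
  shows "conf_partition H C = (\<lambda>x. {x}) ` C"
  unfolding conf_partition_def quotient_def using conf_conn_no_member_iff[OF assms] by auto

lemma conf_partition_connected:
  assumes "C \<noteq> {}" "\<And>x y. x \<in> C \<Longrightarrow> y \<in> C \<Longrightarrow> conf_conn H C x y"
  shows "conf_partition H C = {C}"
proof -
  have "{(x, y). conf_conn H C x y} `` {x} = C" if "x \<in> C" for x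
    using that assms(2) conf_conn_in by fastforce
  then show ?thesis unfolding conf_partition_def quotient_def using assms(1) by blast
qed

lemma conf_restr_worth_no_member:
  assumes "\<forall>h\<in>H. \<not> h \<subseteq> C"
  shows "conf_restr (worth d E) H C = 0"
  unfolding conf_restr_def conf_partition_no_member[OF assms] by (rule sum.neutral) auto

lemma conf_restr_connected:
  assumes "C \<noteq> {}" "\<And>x y. x \<in> C \<Longrightarrow> y \<in> C \<Longrightarrow> conf_conn H C x y"
  shows "conf_restr u H C = u C"
  using conf_partition_connected[OF assms] by (simp add: conf_restr_def)

lemma sum_Pow_card:
  fixes h :: "nat \<Rightarrow> 'b::comm_semiring_1"
  assumes "finite A"
  shows "(\<Sum>S\<in>Pow A. h (card S)) = (\<Sum>s\<le>card A. of_nat (card A choose s) * h s)"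
proof -
  have "(\<Sum>S\<in>Pow A. h (card S)) = (\<Sum>s\<le>card A. \<Sum>S\<in>{S\<in>Pow A. card S = s}. h (card S))"
    using assms by (intro sum.group[symmetric]) (auto simp: card_mono)
  also have "\<dots> = (\<Sum>s\<le>card A. of_nat (card A choose s) * h s)"
  proof (rule sum.cong[OF refl])
    fix s
    have "{S\<in>Pow A. card S = s} = {S. S \<subseteq> A \<and> card S = s}" by auto
    then show "(\<Sum>S\<in>{S\<in>Pow A. card S = s}. h (card S)) = of_nat (card A choose s) * h s"
      using n_subsets[OF assms] by simp
  qed
  finally show ?thesis .
qed

lemma shapley_card_marginal:
  assumes "finite N" "i \<in> N" "card N = Suc n"
    and "\<And>S. S \<subseteq> N - {i} \<Longrightarrow> u (insert i S) - u S = m (card S)"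
  shows "shapley i N u = (\<Sum>s\<le>n. m s) / (real n + 1)"
proof -
  have A: "finite (N - {i})" "card (N - {i}) = n" using assms(1-3) by auto
  have "shapley i N u
      = (\<Sum>S\<in>Pow (N - {i}). fact (card S) * fact (n - card S) / fact (Suc n) * m (card S))"
    unfolding shapley_def using assms(3,4) by (intro sum.cong) auto
  also have "\<dots> = (\<Sum>s\<le>n. of_nat (n choose s) * (fact s * fact (n - s) / fact (Suc n) * m s))"
    using sum_Pow_card[OF A(1), of "\<lambda>s. fact s * fact (n - s) / fact (Suc n) * m s"]
    by (simp only: A(2))
  also have "\<dots> = (\<Sum>s\<le>n. m s / (real n + 1))"
    by (intro sum.cong) (auto simp: binomial_fact)
  finally show ?thesis by (simp add: sum_divide_distrib)
qed

lemma shapley_pivot_marginal: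
  assumes "finite N" "i \<in> N" "j \<in> N" "i \<noteq> j" "card N = Suc (Suc n)"
    and "\<And>S. S \<subseteq> N - {i, j} \<Longrightarrow> u (insert i S) = u S"
    and "\<And>S. S \<subseteq> N - {i, j} \<Longrightarrow> u (insert i (insert j S)) - u (insert j S) = m (card S)"
  shows "shapley i N u = (\<Sum>t\<le>n. (real t + 1) * m t) / ((real n + 1) * (real n + 2))"
proof -
  define A where "A = N - {i, j}"
  have A: "finite A" "card A = n" "j \<notin> A" "N - {i} = insert j A"
    using assms(1-5) by (auto simp: A_def card_Diff_subset)
  define w where
    "w S = fact (card S) * fact (card N - card S - 1) / fact (card N) * (u (insert i S) - u S)" for S
  have "shapley i N u = sum w (Pow A) + sum w (insert j ` Pow A)"
    unfolding shapley_def w_def[symmetric] A(4) Pow_insert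
    using A(1,3) by (intro sum.union_disjoint) auto
  also have "sum w (Pow A) = 0"
    using assms(6) by (intro sum.neutral) (auto simp: w_def A_def)
  also have "sum w (insert j ` Pow A) = (\<Sum>T\<in>Pow A. w (insert j T))"
    using A(3) by (intro sum.reindex_cong[of "insert j"]) (auto simp: inj_on_def)
  also have "\<dots> = (\<Sum>T\<in>Pow A. fact (card T + 1) * fact (n - card T) / fact (n + 2) * m (card T))"
  proof (intro sum.cong refl)
    fix T assume "T \<in> Pow A"
    then have T: "T \<subseteq> N - {i, j}" "finite T" "j \<notin> T"
      using A finite_subset[of T A] by (auto simp: A_def)
    then show "w (insert j T) = fact (card T + 1) * fact (n - card T) / fact (n + 2) * m (card T)"
      using assms(5) assms(7)[OF T(1)] by (simp add: w_def)
  qed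
  also have "\<dots> = (\<Sum>t\<le>n. of_nat (n choose t) * (fact (t + 1) * fact (n - t) / fact (n + 2) * m t))"
    using sum_Pow_card[OF A(1), of "\<lambda>t. fact (t + 1) * fact (n - t) / fact (n + 2) * m t"]
    by (simp only: A(2))
  also have "\<dots> = (\<Sum>t\<le>n. (real t + 1) * m t / ((real n + 1) * (real n + 2)))"
  proof (intro sum.cong refl)
    fix t assume "t \<in> {..n}"
    have "real (n choose t) * (fact (t + 1) * fact (n - t) / fact (n + 2) * m t)
        = (real t + 1) * m t / ((real n + 1) * (real n + 2))
          * (real (n choose t) * (fact t * fact (n - t)) / fact n)"
      by (simp add: numeral_2_eq_2 field_simps)
    also have "real (n choose t) * (fact t * fact (n - t)) / fact n = 1"
      using \<open>t \<in> {..n}\<close> by (simp add: binomial_fact)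
    finally show "real (n choose t) * (fact (t + 1) * fact (n - t) / fact (n + 2) * m t)
        = (real t + 1) * m t / ((real n + 1) * (real n + 2))"
      by simp
  qed
  finally show ?thesis by (simp add: sum_divide_distrib)
qed

definition star_game :: "real \<Rightarrow> nat \<Rightarrow> nat set \<Rightarrow> real" where
  "star_game d k = conf_restr (worth d (star_edge k)) {{i, j} | i j. star_edge k i j}"

definition star_worth :: "real \<Rightarrow> nat \<Rightarrow> real" where
  "star_worth d m = 2 * real m * d + real m * (real m - 1) * d\<^sup>2"

lemma dpow_star_dist:
  assumes "C \<subseteq> {0..k}" "0 \<in> C" "i \<in> C" "j \<in> C" "i \<noteq> j"
  shows "dpow d (sp_dist (star_edge k) C i j) = (if i = 0 \<or> j = 0 then d else d\<^sup>2)"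
proof (cases "i = 0 \<or> j = 0")
  case True
  then have "star_edge k i j" using assms by (auto simp: star_edge_def)
  then show ?thesis using True assms by (simp add: sp_dist_eq_1)
next
  case False
  then have "star_edge k i 0" "star_edge k 0 j" "\<not> star_edge k i j"
    using assms by (auto simp: star_edge_def)
  then show ?thesis using False assms by (simp add: sp_dist_eq_2)
qed

lemma worth_star_coalition:
  assumes "C \<subseteq> {0..k}" "0 \<in> C"
  shows "worth d (star_edge k) C = star_worth d (card C - 1)"
proof -
  define L where "L = C - {0}"
  have L: "finite L" "0 \<notin> L" "C = insert 0 L"
    using finite_subset[OF assms(1)] assms(2) by (auto simp: L_def)
  have leaf_row: "(\<Sum>j\<in>C - {i}. if i = 0 \<or> j = 0 then d else d\<^sup>2) = d + real (card L - 1) * d\<^sup>2"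
    if "i \<in> L" for i
  proof -
    have "C - {i} = insert 0 (L - {i})" "0 \<notin> L - {i}" using that L by auto
    moreover have "(\<Sum>j\<in>L - {i}. if i = 0 \<or> j = 0 then d else d\<^sup>2) = (\<Sum>j\<in>L - {i}. d\<^sup>2)"
      using that L by (intro sum.cong) auto
    ultimately show ?thesis using that L by simp
  qed
  have "worth d (star_edge k) C = (\<Sum>i\<in>C. \<Sum>j\<in>C - {i}. if i = 0 \<or> j = 0 then d else d\<^sup>2)"
    unfolding worth_def using dpow_star_dist[OF assms] by (intro sum.cong) auto
  also have "\<dots> = real (card L) * d + real (card L) * (d + real (card L - 1) * d\<^sup>2)"
    using L leaf_row by simp
  also have "\<dots> = star_worth d (card L)"
    by (cases "card L") (simp_all add: star_worth_def algebra_simps)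
  finally show ?thesis using L by simp
qed

lemma star_game_without_hub: "0 \<notin> C \<Longrightarrow> star_game d k C = 0"
  unfolding star_game_def by (rule conf_restr_worth_no_member) (auto simp: star_edge_def)

lemma conf_conn_star:
  assumes "C \<subseteq> {0..k}" "0 \<in> C" "x \<in> C" "y \<in> C"
  shows "conf_conn {{i, j} | i j. star_edge k i j} C x y"
proof (cases "x = y")
  case True
  then show ?thesis using assms(3) by (simp add: conf_conn_def)
next
  case False
  then obtain l where l: "l \<in> C" "l \<noteq> 0" using assms(3,4) by (cases "x = 0") auto
  define spoke where "spoke z = {0, if z = 0 then l else z}" for z
  have spoke: "spoke z \<in> {{i, j} | i j. star_edge k i j} \<and> spoke z \<subseteq> C \<and> z \<in> spoke z \<and> 0 \<in> spoke z"
    if "z \<in> C" for z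
  proof -
    have "star_edge k 0 (if z = 0 then l else z)"
      using that l assms(1) by (auto simp: star_edge_def)
    then have "spoke z \<in> {{i, j} | i j. star_edge k i j}"
      unfolding spoke_def by blast
    moreover have "spoke z \<subseteq> C" "z \<in> spoke z" "0 \<in> spoke z"
      using that l assms(2) unfolding spoke_def by auto
    ultimately show ?thesis by blast
  qed
  show ?thesis
    using spoke[OF assms(3)] spoke[OF assms(4)]
    by (intro conf_conn_chain2I[of "spoke x" _ "spoke y"]) auto
qed

lemma star_game_with_hub:
  assumes "C \<subseteq> {0..k}" "0 \<in> C"
  shows "star_game d k C = star_worth d (card C - 1)"
  unfolding star_game_def using assms
  by (subst conf_restr_connected) (auto intro: conf_conn_star simp: worth_star_coalition)

lemma sum_star_worth:
  "(\<Sum>s\<le>k. star_worth d s) = (real k + 1) * (real k * d + real k * (real k - 1) / 3 * d\<^sup>2)"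
  by (induction k) (simp_all add: star_worth_def field_simps power2_eq_square)

lemma sum_weighted_star_worth_increments:
  "(\<Sum>t\<le>n. (real t + 1) * (star_worth d (Suc t) - star_worth d t))
    = (real n + 1) * (real n + 2) * (d + 2 * real n / 3 * d\<^sup>2)"
  by (induction n) (simp_all add: star_worth_def field_simps power2_eq_square)

lemma shapley_star_hub:
  "shapley 0 {0..k} (star_game d k) = real k * d + real k * (real k - 1) / 3 * d\<^sup>2"
proof -
  have "shapley 0 {0..k} (star_game d k) = (\<Sum>s\<le>k. star_worth d s) / (real k + 1)"
  proof (rule shapley_card_marginal)
    fix S assume S: "S \<subseteq> {0..k} - {0}"
    then have "finite S" "0 \<notin> S" "insert 0 S \<subseteq> {0..k}"
      using finite_subset[of S "{0..k}"] by auto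
    then show "star_game d k (insert 0 S) - star_game d k S = star_worth d (card S)"
      by (simp add: star_game_with_hub star_game_without_hub)
  qed auto
  then show ?thesis by (simp add: sum_star_worth)
qed

lemma shapley_star_leaf:
  assumes "l \<in> {1..k}"
  shows "shapley l {0..k} (star_game d k) = d + 2 * (real k - 1) / 3 * d\<^sup>2"
proof -
  obtain n where k: "k = Suc n" using assms by (cases k) auto
  have "shapley l {0..k} (star_game d k)
      = (\<Sum>t\<le>n. (real t + 1) * (star_worth d (Suc t) - star_worth d t)) / ((real n + 1) * (real n + 2))"
  proof (rule shapley_pivot_marginal[where j = 0])
    fix S assume "S \<subseteq> {0..k} - {l, 0}"
    then have "0 \<notin> S" by auto
    then show "star_game d k (insert l S) = star_game d k S"
      using assms by (simp add: star_game_without_hub)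
  next
    fix S assume S: "S \<subseteq> {0..k} - {l, 0}"
    then have "finite S" "0 \<notin> S" "l \<notin> S" "l \<noteq> 0" "insert l (insert 0 S) \<subseteq> {0..k}"
      using finite_subset[of S "{0..k}"] assms by auto
    then show "star_game d k (insert l (insert 0 S)) - star_game d k (insert 0 S)
        = star_worth d (Suc (card S)) - star_worth d (card S)"
      by (simp add: star_game_with_hub)
  qed (use assms k in auto)
  then show ?thesis by (simp add: sum_weighted_star_worth_increments k)
qed

theorem mainTheorem4:
  fixes d :: real and k :: nat
  assumes "0 < d" and "d < 1" and "1 \<le> k"
  defines "V \<equiv> {0..k}"
      and "H \<equiv> {{i, j} | i j. star_edge k i j}"
  shows "(\<forall>l\<in>{1..k}. shapley l V (conf_restr (worth d (star_edge k)) H)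
            = d + 2 * (real k - 1) / 3 * d ^ 2)
       \<and> shapley 0 V (conf_restr (worth d (star_edge k)) H)
            = real k * d + real k * (real k - 1) / 3 * d ^ 2"
  unfolding V_def H_def star_game_def[symmetric]
  using shapley_star_leaf shapley_star_hub by blast

end
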